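(* Let $\mathcal F\subseteq\{\mathcal X\to[0,1]\}$ be a hypothesis class. Then for all integers $T,k\ge1$, $$\underline{\mathcal R}_T^{kT}(\mathcal F)\le\inf_{\epsilon>0}\Big\{\sup_{Z\subseteq\mathcal X,\,|Z|=kT}\log\mathcal N(\mathcal F|_Z,\epsilon)+2\epsilon T\Big\}.$$
   Context: Setting: contexts $\mathcal X$, labels $\{0,1\}$, log loss. For $f\in\mathcal F$, $p_f(1\mid x)=f(x)$, $p_f(0\mid x)=1-f(x)$; learner actions $a$ are pmfs on $\{0,1\}$ with loss $\ell(a,(x,y))=-\log a(y)$, and $f$ incurs $-\log p_f(y\mid x)$. Regret: $\mathcal R(\mathcal F,x_{1:T},y_{1:T},a_{1:T})=\sum_{t}\ell(a_t,(x_t,y_t))-\inf_{f\in\mathcal F}\sum_t(-\log p_f(y_t\mid x_t))$. For finite $X\subseteq\mathcal X$, $\underline{\mathcal R}_T(\mathcal F,X)=\max_{x_1\in X}\inf_{a_1}\sup_{y_1}\cdots\max_{x_T\in X}\inf_{a_T}\sup_{y_T}\mathcal R(\mathcal F,x_{1:T},y_{1:T},a_{1:T})$ and $\underline{\mathcal R}_T^M(\mathcal F)=\max_{|X|=M}\underline{\mathcal R}_T(\mathcal F,X)$. For a class $\mathcal G$ of functions on a set $Z$, a set $\tilde{\mathcal G}$ is an $\epsilon$-covering if for every $g\in\mathcal G$ there is $\tilde g\in\tilde{\mathcal G}$ with $\sup_{x\in Z}|g(x)-\tilde g(x)|\le\epsilon$; $\mathcal N(\mathcal G,\epsilon)$ is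 the minimal size of such a covering. $\mathcal F|_Z$ is the restriction of $\mathcal F$ to $Z$. Logarithms are natural. *)

theory Defs
  imports "HOL-Analysis.Analysis"
begin

text \<open>Labels are booleans (True = label 1). A pmf on {0,1} is identified with
  its mass q = a(1) \<in> [0,1]. prob_of q y is the probability of label y.\<close>

definition prob_of :: "real \<Rightarrow> bool \<Rightarrow> real" where
  "prob_of q y = (if y then q else 1 - q)"

definition nll :: "real \<Rightarrow> bool \<Rightarrow> ereal" where
  "nll q y = (if prob_of q y = 0 then \<infinity> else ereal (- ln (prob_of q y)))"

text \<open>A history entry is (x_t, a_t, y_t) with a_t the learner's mass on label 1.\<close>
definition learner_loss :: "('x \<times> real \<times> bool) list \<Rightarrow> ereal" where
  "learner_loss h = (\<Sum>(x,a,y)\<leftarrow>h. nll a y)"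

definition hyp_loss :: "('x \<Rightarrow> real) \<Rightarrow> ('x \<times> real \<times> bool) list \<Rightarrow> ereal" where
  "hyp_loss f h = (\<Sum>(x,a,y)\<leftarrow>h. nll (f x) y)"

definition regret :: "('x \<Rightarrow> real) set \<Rightarrow> ('x \<times> real \<times> bool) list \<Rightarrow> ereal" where
  "regret F h = learner_loss h - (INF f\<in>F. hyp_loss f h)"

fun game_val :: "('x \<Rightarrow> real) set \<Rightarrow> 'x set \<Rightarrow> nat \<Rightarrow> ('x \<times> real \<times> bool) list \<Rightarrow> ereal" where
  "game_val F X 0 h = regret F h"
| "game_val F X (Suc n) h =
     (SUP x\<in>X. INF a\<in>{0..1}. SUP y\<in>UNIV. game_val F X n (h @ [(x, a, y)]))"

definition minimax_regret :: "('x \<Rightarrow> real) set \<Rightarrow> 'x set \<Rightarrow> nat \<Rightarrow> ereal" where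
  "minimax_regret F X T = game_val F X T []"

definition minimax_regret_M :: "('x \<Rightarrow> real) set \<Rightarrow> nat \<Rightarrow> nat \<Rightarrow> ereal" where
  "minimax_regret_M F T M = (SUP X\<in>{X. finite X \<and> card X = M}. minimax_regret F X T)"

definition covering_number :: "('x \<Rightarrow> real) set \<Rightarrow> 'x set \<Rightarrow> real \<Rightarrow> nat" where
  "covering_number F Z eps =
     Inf {card C | C. finite C \<and> (\<forall>f\<in>F. \<exists>g\<in>C. \<forall>x\<in>Z. \<bar>f x - g x\<bar> \<le> eps)}"

end

theory Submission
  imports Defs
begin

text \<open>Fix a finite \<open>\<epsilon>\<close>-cover \<open>C\<close> of \<open>\<F>\<close> on \<open>X\<close>. Clipping each \<open>g \<in> C\<close> to \<open>[0,1]\<close>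
  and shrinking it to \<open>[\<epsilon>/(1+2\<epsilon>), (1+\<epsilon>)/(1+2\<epsilon>)]\<close> gives an expert whose probability of
  every label is at least that of any \<open>f\<close> it covers divided by \<open>1 + 2\<epsilon>\<close>. The Bayesian
  mixture of these \<open>|C|\<close> experts has log loss at most \<open>ln |C|\<close> more than the best of
  them, hence regret at most \<open>ln |C| + T ln (1 + 2\<epsilon>) \<le> ln |C| + 2\<epsilon>T\<close> against \<open>\<F>\<close>,
  whatever the adversary does.\<close>

definition smooth :: "real \<Rightarrow> real \<Rightarrow> real" where
  "smooth e q = (max 0 (min 1 q) + e) / (1 + 2 * e)"

definition smooth_loss :: "real \<Rightarrow> ('x \<Rightarrow> real) \<Rightarrow> ('x \<times> real \<times> bool) list \<Rightarrow> real" where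
  "smooth_loss e g h = (\<Sum>(x,a,y)\<leftarrow>h. - ln (prob_of (smooth e (g x)) y))"

definition mixture_weight :: "('x \<Rightarrow> real) set \<Rightarrow> real \<Rightarrow> ('x \<times> real \<times> bool) list \<Rightarrow> real" where
  "mixture_weight C e h = (\<Sum>g\<in>C. exp (- smooth_loss e g h))"

definition mixture_forecast ::
    "('x \<Rightarrow> real) set \<Rightarrow> real \<Rightarrow> ('x \<times> real \<times> bool) list \<Rightarrow> 'x \<Rightarrow> real" where
  "mixture_forecast C e h x =
     (\<Sum>g\<in>C. exp (- smooth_loss e g h) * smooth e (g x)) / mixture_weight C e h"

lemma prob_of_smooth_pos: "e > 0 \<Longrightarrow> 0 < prob_of (smooth e q) y"
  by (auto simp: prob_of_def smooth_def field_simps)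

lemma prob_of_le_smooth:
  assumes "e > 0" "0 \<le> p" "p \<le> 1" "\<bar>p - q\<bar> \<le> e"
  shows "prob_of p y \<le> (1 + 2 * e) * prob_of (smooth e q) y"
proof -
  define c where "c = max 0 (min 1 q)"
  have c: "p - e \<le> c" "c \<le> p + e"
    using assms unfolding c_def by (auto simp: max_def min_def)
  have "(1 + 2 * e) * prob_of (smooth e q) y = (if y then c + e else 1 + e - c)"
    using assms(1) unfolding prob_of_def smooth_def c_def[symmetric]
    by (cases y) (simp_all add: divide_simps)
  then show ?thesis
    using c by (auto simp: prob_of_def)
qed

lemma smooth_nll_le_nll:
  assumes "e > 0" "0 \<le> p" "p \<le> 1" "\<bar>p - q\<bar> \<le> e"
  shows "ereal (- ln (prob_of (smooth e q) y) - ln (1 + 2 * e)) \<le> nll p y"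
proof (cases "prob_of p y = 0")
  case False
  then have "0 < prob_of p y"
    using assms by (auto simp: prob_of_def)
  then have "ln (prob_of p y) \<le> ln ((1 + 2 * e) * prob_of (smooth e q) y)"
    using prob_of_le_smooth[OF assms, of y] by simp
  also have "\<dots> = ln (1 + 2 * e) + ln (prob_of (smooth e q) y)"
    using assms(1) prob_of_smooth_pos[OF assms(1), of q y] by (simp add: ln_mult)
  finally show ?thesis
    using False by (simp add: nll_def)
qed (simp add: nll_def)

lemma smooth_loss_Nil [simp]: "smooth_loss e g [] = 0"
  by (simp add: smooth_loss_def)

lemma smooth_loss_Cons:
  "smooth_loss e g ((x,a,y) # h) = - ln (prob_of (smooth e (g x)) y) + smooth_loss e g h"
  by (simp add: smooth_loss_def)

lemma exp_smooth_loss_snoc: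
  assumes "e > 0"
  shows "exp (- smooth_loss e g (h @ [(x,a,y)])) =
         exp (- smooth_loss e g h) * prob_of (smooth e (g x)) y"
proof -
  have "exp (- smooth_loss e g (h @ [(x,a,y)])) =
        exp (- smooth_loss e g h + ln (prob_of (smooth e (g x)) y))"
    by (simp add: smooth_loss_def)
  then show ?thesis
    by (simp only: exp_add exp_ln[OF prob_of_smooth_pos[OF assms]])
qed

lemma hyp_loss_ge_smooth_loss:
  assumes "e > 0" and "\<forall>x\<in>X. 0 \<le> f x \<and> f x \<le> 1 \<and> \<bar>f x - g x\<bar> \<le> e"
    and "\<forall>(x,a,y)\<in>set h. x \<in> X"
  shows "ereal (smooth_loss e g h - real (length h) * ln (1 + 2 * e)) \<le> hyp_loss f h"
  using assms(3)
proof (induction h)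
  case Nil
  then show ?case by (simp add: hyp_loss_def)
next
  case (Cons p h)
  obtain x a y where p: "p = (x,a,y)" and "x \<in> X"
    using Cons.prems by (cases p) auto
  have "ereal (smooth_loss e g (p # h) - real (length (p # h)) * ln (1 + 2 * e)) =
        ereal (- ln (prob_of (smooth e (g x)) y) - ln (1 + 2 * e)) +
        ereal (smooth_loss e g h - real (length h) * ln (1 + 2 * e))"
    by (simp add: p smooth_loss_Cons algebra_simps)
  also have "\<dots> \<le> nll (f x) y + hyp_loss f h"
    using Cons \<open>x \<in> X\<close> assms(1,2) by (intro add_mono smooth_nll_le_nll) auto
  also have "\<dots> = hyp_loss f (p # h)"
    by (simp add: p hyp_loss_def)
  finally show ?case .
qed

lemma learner_loss_snoc: "learner_loss (h @ [(x,a,y)]) = learner_loss h + nll a y"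
  by (simp add: learner_loss_def)

context
  fixes C :: "('x \<Rightarrow> real) set" and e :: real
  assumes C: "finite C" "C \<noteq> {}" and e: "e > 0"
begin

lemma mixture_weight_pos: "0 < mixture_weight C e h"
  unfolding mixture_weight_def using C by (intro sum_pos) auto

lemma prob_of_mixture_forecast:
  "prob_of (mixture_forecast C e h x) y =
   (\<Sum>g\<in>C. exp (- smooth_loss e g h) * prob_of (smooth e (g x)) y) / mixture_weight C e h"
proof (cases y)
  case False
  have "(\<Sum>g\<in>C. exp (- smooth_loss e g h) * (1 - smooth e (g x))) =
        mixture_weight C e h - (\<Sum>g\<in>C. exp (- smooth_loss e g h) * smooth e (g x))"
    by (simp add: mixture_weight_def algebra_simps sum_subtractf)
  then show ?thesis
    using False mixture_weight_pos[of h]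
    by (simp add: prob_of_def mixture_forecast_def field_simps)
qed (simp add: prob_of_def mixture_forecast_def)

lemma prob_of_mixture_forecast_pos: "0 < prob_of (mixture_forecast C e h x) y"
  unfolding prob_of_mixture_forecast using C mixture_weight_pos[of h]
  by (intro divide_pos_pos sum_pos mult_pos_pos prob_of_smooth_pos[OF e]) auto

lemma mixture_forecast_in_unit: "mixture_forecast C e h x \<in> {0..1}"
  using prob_of_mixture_forecast_pos[of h x True] prob_of_mixture_forecast_pos[of h x False]
  by (simp add: prob_of_def)

text \<open>The mixture's probability of the observed label is the ratio of successive weights,
  so its cumulative log loss telescopes.\<close>
lemma mixture_weight_snoc:
  "mixture_weight C e (h @ [(x, mixture_forecast C e h x, y)]) =
   mixture_weight C e h * prob_of (mixture_forecast C e h x) y"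
  using mixture_weight_pos[of h]
  by (simp add: mixture_weight_def exp_smooth_loss_snoc[OF e] prob_of_mixture_forecast)

lemma regret_le_mixture_potential:
  assumes F: "\<forall>f\<in>F. \<forall>x\<in>X. 0 \<le> f x \<and> f x \<le> 1"
    and cover: "\<forall>f\<in>F. \<exists>g\<in>C. \<forall>x\<in>X. \<bar>f x - g x\<bar> \<le> e"
    and h: "\<forall>(x,a,y)\<in>set h. x \<in> X"
  shows "regret F h \<le>
    learner_loss h + ereal (ln (mixture_weight C e h) + real (length h) * ln (1 + 2 * e))"
proof -
  let ?\<Phi> = "ln (mixture_weight C e h) + real (length h) * ln (1 + 2 * e)"
  have "ereal (- ?\<Phi>) \<le> (INF f\<in>F. hyp_loss f h)"
  proof (rule INF_greatest)
    fix f assume "f \<in> F"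
    then obtain g where g: "g \<in> C" "\<forall>x\<in>X. \<bar>f x - g x\<bar> \<le> e"
      using cover by auto
    have "exp (- smooth_loss e g h) \<le> mixture_weight C e h"
      unfolding mixture_weight_def using C g by (intro member_le_sum) auto
    then have "- smooth_loss e g h \<le> ln (mixture_weight C e h)"
      using mixture_weight_pos[of h] by (metis ln_exp ln_le_cancel_iff exp_gt_zero)
    then have "ereal (- ?\<Phi>) \<le> ereal (smooth_loss e g h - real (length h) * ln (1 + 2 * e))"
      by simp
    also have "\<dots> \<le> hyp_loss f h"
      using F \<open>f \<in> F\<close> g h by (intro hyp_loss_ge_smooth_loss[OF e]) auto
    finally show "ereal (- ?\<Phi>) \<le> hyp_loss f h" .
  qed
  then have "regret F h \<le> learner_loss h - ereal (- ?\<Phi>)"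
    unfolding regret_def by (intro ereal_minus_mono) auto
  then show ?thesis
    by (simp add: minus_ereal_def add.commute)
qed

text \<open>Playing the mixture forecast at every round keeps the potential invariant.\<close>
lemma game_val_le_mixture_potential:
  assumes F: "\<forall>f\<in>F. \<forall>x\<in>X. 0 \<le> f x \<and> f x \<le> 1"
    and cover: "\<forall>f\<in>F. \<exists>g\<in>C. \<forall>x\<in>X. \<bar>f x - g x\<bar> \<le> e"
    and "\<forall>(x,a,y)\<in>set h. x \<in> X"
  shows "game_val F X n h \<le>
    learner_loss h + ereal (ln (mixture_weight C e h) + real (length h + n) * ln (1 + 2 * e))"
  using assms(3)
proof (induction n arbitrary: h)
  case 0
  show ?case
    using regret_le_mixture_potential[OF F cover "0"] by simp
next
  case (Suc n)
  let ?R = "learner_loss h +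
    ereal (ln (mixture_weight C e h) + real (length h + Suc n) * ln (1 + 2 * e))"
  have "(INF a\<in>{0..1}. SUP y. game_val F X n (h @ [(x, a, y)])) \<le> ?R" if "x \<in> X" for x
  proof -
    let ?m = "mixture_forecast C e h x"
    have "game_val F X n (h @ [(x, ?m, y)]) \<le> ?R" for y
    proof -
      have "game_val F X n (h @ [(x, ?m, y)]) \<le> learner_loss (h @ [(x, ?m, y)]) +
          ereal (ln (mixture_weight C e (h @ [(x, ?m, y)])) +
                 real (length (h @ [(x, ?m, y)]) + n) * ln (1 + 2 * e))"
        using Suc.prems \<open>x \<in> X\<close> by (intro Suc.IH) auto
      also have "\<dots> = learner_loss h + ereal (- ln (prob_of ?m y)) +
          ereal (ln (mixture_weight C e h) + ln (prob_of ?m y) + real (length h + Suc n) * ln (1 + 2 * e))"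
        using prob_of_mixture_forecast_pos[of h x y] mixture_weight_pos[of h]
        by (simp add: learner_loss_snoc nll_def mixture_weight_snoc ln_mult algebra_simps)
      also have "\<dots> = ?R"
        by (simp add: add.assoc)
      finally show ?thesis .
    qed
    then have "(SUP y. game_val F X n (h @ [(x, ?m, y)])) \<le> ?R"
      by (rule SUP_least)
    then show ?thesis
      using mixture_forecast_in_unit by (meson INF_lower order_trans)
  qed
  then show ?case
    by (simp add: SUP_least)
qed

end

lemma finite_cover_exists:
  assumes X: "finite X" and e: "e > 0" and F: "\<forall>f\<in>F. \<forall>x\<in>X. 0 \<le> f x \<and> f x \<le> 1"
  shows "\<exists>C. finite C \<and> (\<forall>f\<in>F. \<exists>g\<in>C. \<forall>x\<in>X. \<bar>f x - g x\<bar> \<le> (e::real))"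
proof -
  define grid where "grid = (\<lambda>j::int. e * of_int j) ` {0..\<lceil>1/e\<rceil>}"
  define round_down where "round_down f = restrict (\<lambda>x. e * of_int \<lfloor>f x / e\<rfloor>) X" for f
  have "round_down f \<in> PiE X (\<lambda>_. grid) \<and> (\<forall>x\<in>X. \<bar>f x - round_down f x\<bar> \<le> e)"
    if "f \<in> F" for f
  proof -
    have "e * of_int \<lfloor>f x / e\<rfloor> \<in> grid \<and> \<bar>f x - e * of_int \<lfloor>f x / e\<rfloor>\<bar> \<le> e"
      if "x \<in> X" for x
    proof -
      have f01: "0 \<le> f x" "f x \<le> 1"
        using F \<open>f \<in> F\<close> \<open>x \<in> X\<close> by auto
      have "\<lfloor>f x / e\<rfloor> \<le> \<lceil>1/e\<rceil>"
        using f01 e floor_le_ceiling[of "1/e"]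
        by (meson divide_right_mono floor_mono less_imp_le order_trans)
      then have "\<lfloor>f x / e\<rfloor> \<in> {0..\<lceil>1/e\<rceil>}"
        using f01 e by auto
      moreover have "e * of_int \<lfloor>f x / e\<rfloor> \<le> f x"
        using e mult_left_mono[OF of_int_floor_le[of "f x / e"], of e] by simp
      moreover have "f x < e * of_int \<lfloor>f x / e\<rfloor> + e"
        using e real_of_int_floor_add_one_gt[of "f x / e"] by (simp add: field_simps)
      ultimately show ?thesis
        unfolding grid_def by auto
    qed
    then show ?thesis
      unfolding round_down_def by auto
  qed
  moreover have "finite (PiE X (\<lambda>_. grid))"
    unfolding grid_def using X by (intro finite_PiE) auto
  ultimately show ?thesis
    by blast
qed

text \<open>When \<open>\<F> = {}\<close> the covering number is \<open>0\<close> and \<open>ln 0 = 0\<close> in Isabelle,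
  so a singleton cover has the same logarithm.\<close>

lemma minimal_nonempty_cover_exists:
  assumes X: "finite X" and e: "e > 0" and F: "\<forall>f\<in>F. \<forall>x\<in>X. 0 \<le> f x \<and> f x \<le> 1"
  obtains C where "finite C" "C \<noteq> {}" "\<forall>f\<in>F. \<exists>g\<in>C. \<forall>x\<in>X. \<bar>f x - g x\<bar> \<le> e"
    and "ln (real (card C)) = ln (real (covering_number F X e))"
proof (cases "F = {}")
  case True
  have "covering_number F X e = 0"
    unfolding covering_number_def using True
    by (intro cInf_eq_minimum) (auto intro!: exI[of _ "{}"])
  then show ?thesis
    using True by (intro that[of "{\<lambda>_. 0}"]) auto
next
  case False
  let ?S = "{card C | C. finite C \<and> (\<forall>f\<in>F. \<exists>g\<in>C. \<forall>x\<in>X. \<bar>f x - g x\<bar> \<le> e)}"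
  have "?S \<noteq> {}"
    using finite_cover_exists[OF X e F] by auto
  then have "Inf ?S \<in> ?S"
    by (rule Inf_nat_def1)
  then obtain C where "finite C" "\<forall>f\<in>F. \<exists>g\<in>C. \<forall>x\<in>X. \<bar>f x - g x\<bar> \<le> e"
    "card C = covering_number F X e"
    unfolding covering_number_def by auto
  then show ?thesis
    using False by (intro that[of C]) auto
qed

lemma minimax_regret_le_covering_number:
  assumes F: "\<forall>f\<in>F. \<forall>x\<in>X. 0 \<le> f x \<and> f x \<le> 1" and X: "finite X" and e: "e > 0"
  shows "minimax_regret F X T \<le> ereal (ln (real (covering_number F X e))) + ereal (2 * e * real T)"
proof -
  obtain C where C: "finite C" "C \<noteq> {}" "\<forall>f\<in>F. \<exists>g\<in>C. \<forall>x\<in>X. \<bar>f x - g x\<bar> \<le> e"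
    and ln_card: "ln (real (card C)) = ln (real (covering_number F X e))"
    using minimal_nonempty_cover_exists[OF X e F] by blast
  have "minimax_regret F X T \<le> ereal (ln (real (card C)) + real T * ln (1 + 2 * e))"
    using game_val_le_mixture_potential[OF C(1,2) e F C(3), of "[]" T]
    by (simp add: minimax_regret_def learner_loss_def mixture_weight_def)
  also have "\<dots> \<le> ereal (ln (real (card C)) + real T * (2 * e))"
    using e by (simp add: mult_left_mono ln_add_one_self_le_self)
  finally show ?thesis
    using ln_card by (simp add: mult_ac)
qed

theorem theorem3p2:
  fixes F :: "('x \<Rightarrow> real) set" and T k :: nat
  assumes "\<forall>f\<in>F. \<forall>x. 0 \<le> f x \<and> f x \<le> 1"
    and "T \<ge> 1" and "k \<ge> 1"
  shows "minimax_regret_M F T (k * T) \<le>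
    (INF eps\<in>{0<..}.
       (SUP Z\<in>{Z. finite Z \<and> card Z = k * T}. ereal (ln (real (covering_number F Z eps))))
       + ereal (2 * eps * real T))"
  unfolding minimax_regret_M_def
proof (intro INF_greatest SUP_least)
  fix eps :: real and X :: "'x set"
  assume "eps \<in> {0<..}" and X: "X \<in> {X. finite X \<and> card X = k * T}"
  then have "minimax_regret F X T \<le>
      ereal (ln (real (covering_number F X eps))) + ereal (2 * eps * real T)"
    using assms(1) by (intro minimax_regret_le_covering_number) auto
  also have "\<dots> \<le> (SUP Z\<in>{Z. finite Z \<and> card Z = k * T}. ereal (ln (real (covering_number F Z eps))))
      + ereal (2 * eps * real T)"
    using X by (intro add_right_mono SUP_upper)
  finally show "minimax_regret F X T \<le> \<dots>" .
qed

end
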